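(* Let $t>1$ be an integer and let $A$ be a connected $Gt$-NEDB graph with constant $\acute{\gamma}_A$ and diameter $d$. Then $d-1\le t\,\acute{\gamma}_A$.
   Context: All graphs are finite, simple, undirected. $d_A(u,v)$ is the shortest-path distance in $A$; for a vertex $v$ and an edge $f'=\alpha'\beta'$, $d_A(v,f')=\min\{d_A(v,\alpha'),d_A(v,\beta')\}$. For an edge $f=\alpha\beta$, $m^A_\alpha(f)$ is the number of edges $f'\in E(A)$ with $d_A(\alpha,f')<d_A(\beta,f')$, and $m^A_\beta(f)$ is defined symmetrically. For an integer $t>1$, a connected graph $A$ is generalized $t$-nicely edge distance-balanced ($Gt$-NEDB) if there is a positive integer $\acute{\gamma}_A$ such that every edge $f$ has its endpoints labelled $\alpha,\beta$ with $m^A_\alpha(f)=t\,m^A_\beta(f)$ and $m^A_\beta(f)=\acute{\gamma}_A$. *)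

theory Defs
  imports Main
begin

definition simple_graph :: "'a set \<Rightarrow> 'a set set \<Rightarrow> bool" where
  "simple_graph V E \<longleftrightarrow> finite V \<and> (\<forall>e\<in>E. \<exists>u v. e = {u, v} \<and> u \<in> V \<and> v \<in> V \<and> u \<noteq> v)"

definition is_walk :: "'a set \<Rightarrow> 'a set set \<Rightarrow> 'a list \<Rightarrow> bool" where
  "is_walk V E p \<longleftrightarrow> p \<noteq> [] \<and> set p \<subseteq> V \<and> (\<forall>i. Suc i < length p \<longrightarrow> {p ! i, p ! Suc i} \<in> E)"

definition connected_graph :: "'a set \<Rightarrow> 'a set set \<Rightarrow> bool" where
  "connected_graph V E \<longleftrightarrow> V \<noteq> {} \<and>
     (\<forall>u\<in>V. \<forall>v\<in>V. \<exists>p. is_walk V E p \<and> hd p = u \<and> last p = v)"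

definition gdist :: "'a set \<Rightarrow> 'a set set \<Rightarrow> 'a \<Rightarrow> 'a \<Rightarrow> nat" where
  "gdist V E u v = (LEAST n. \<exists>p. is_walk V E p \<and> hd p = u \<and> last p = v \<and> length p = Suc n)"

definition gdist_edge :: "'a set \<Rightarrow> 'a set set \<Rightarrow> 'a \<Rightarrow> 'a set \<Rightarrow> nat" where
  "gdist_edge V E v f = Min (gdist V E v ` f)"

text \<open>m_alpha(f) for f = alpha beta: edges strictly closer to alpha than to beta.\<close>
definition m_edge :: "'a set \<Rightarrow> 'a set set \<Rightarrow> 'a \<Rightarrow> 'a \<Rightarrow> nat" where
  "m_edge V E \<alpha> \<beta> = card {f'\<in>E. gdist_edge V E \<alpha> f' < gdist_edge V E \<beta> f'}"

definition diameter :: "'a set \<Rightarrow> 'a set set \<Rightarrow> nat" where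
  "diameter V E = Max {gdist V E u v | u v. u \<in> V \<and> v \<in> V}"

definition gt_nedb :: "'a set \<Rightarrow> 'a set set \<Rightarrow> nat \<Rightarrow> nat \<Rightarrow> bool" where
  "gt_nedb V E t \<gamma> \<longleftrightarrow> connected_graph V E \<and> \<gamma> > 0 \<and>
     (\<forall>f\<in>E. \<exists>\<alpha> \<beta>. f = {\<alpha>, \<beta>} \<and> m_edge V E \<alpha> \<beta> = t * m_edge V E \<beta> \<alpha> \<and> m_edge V E \<beta> \<alpha> = \<gamma>)"

end

theory Submission
  imports Defs
begin

text \<open>Take a shortest walk \<open>x\<^sub>0 x\<^sub>1 \<dots> x\<^sub>d\<close> between two vertices at distance \<open>d\<close>.
  Every segment of it is again shortest, so for \<open>1 \<le> i < d\<close> the edge \<open>x\<^sub>i x\<^sub>i\<^sub>+\<^sub>1\<close> is at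
  distance \<open>i - 1\<close> from \<open>x\<^sub>1\<close> but at distance \<open>i\<close> from \<open>x\<^sub>0\<close>. These \<open>d - 1\<close> distinct edges give
  \<open>m\<^sub>x\<^sub>1(x\<^sub>0x\<^sub>1) \<ge> d - 1\<close>, while in a \<open>Gt\<close>-NEDB graph the larger of the two counts of any edge
  is \<open>t\<gamma>\<close>.\<close>

lemma is_walk_Cons_Cons [simp]:
  "is_walk V E (a # b # p) \<longleftrightarrow> a \<in> V \<and> {a, b} \<in> E \<and> is_walk V E (b # p)"
  by (auto simp: is_walk_def nth_Cons split: nat.splits)

lemma is_walk_append:
  assumes "is_walk V E q" "is_walk V E r" "last q = hd r"
  shows "is_walk V E (q @ tl r)"
  using assms
proof (induction q rule: induct_list012)
  case 1
  then show ?case by (simp add: is_walk_def)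
next
  case (2 a)
  then show ?case by (cases r) auto
next
  case (3 a b q)
  then show ?case by (cases r) auto
qed

lemma last_append_tl: "q \<noteq> [] \<Longrightarrow> r \<noteq> [] \<Longrightarrow> last q = hd r \<Longrightarrow> last (q @ tl r) = last r"
  by (cases r) auto

lemma is_walk_segment:
  assumes "is_walk V E p" "i \<le> j" "j < length p"
  shows "is_walk V E (drop i (take (Suc j) p))"
    and "hd (drop i (take (Suc j) p)) = p ! i"
    and "last (drop i (take (Suc j) p)) = p ! j"
    and "length (drop i (take (Suc j) p)) = Suc (j - i)"
  using assms by (auto simp: is_walk_def hd_drop_conv_nth last_conv_nth dest!: in_set_dropD in_set_takeD)

lemma gdist_le_walk:
  "is_walk V E p \<Longrightarrow> hd p = u \<Longrightarrow> last p = v \<Longrightarrow> gdist V E u v \<le> length p - 1"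
  unfolding gdist_def by (rule Least_le) (auto simp: is_walk_def)

lemma shortest_walk_exists:
  assumes "is_walk V E p" "hd p = u" "last p = v"
  obtains q where "is_walk V E q" "hd q = u" "last q = v" "length q = Suc (gdist V E u v)"
proof -
  have "\<exists>n q. is_walk V E q \<and> hd q = u \<and> last q = v \<and> length q = Suc n"
    using assms by (intro exI[of _ "length p - 1"] exI[of _ p]) (auto simp: is_walk_def)
  from LeastI_ex[OF this] show ?thesis
    using that unfolding gdist_def by blast
qed

lemma gdist_triangle:
  assumes "is_walk V E p" "hd p = u" "last p = w"
    and "is_walk V E q" "hd q = w" "last q = v"
  shows "gdist V E u v \<le> gdist V E u w + gdist V E w v"
proof -
  obtain p' where p': "is_walk V E p'" "hd p' = u" "last p' = w" "length p' = Suc (gdist V E u w)"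
    using shortest_walk_exists assms(1-3) by metis
  obtain q' where q': "is_walk V E q'" "hd q' = w" "last q' = v" "length q' = Suc (gdist V E w v)"
    using shortest_walk_exists assms(4-6) by metis
  have "p' \<noteq> []" "q' \<noteq> []"
    using p' q' by auto
  then have "is_walk V E (p' @ tl q')" "hd (p' @ tl q') = u" "last (p' @ tl q') = v"
    using p' q' by (auto simp: is_walk_append last_append_tl)
  then have "gdist V E u v \<le> length (p' @ tl q') - 1"
    by (rule gdist_le_walk)
  then show ?thesis
    using p' q' by simp
qed

lemma gdist_nth_le:
  assumes "is_walk V E p" "i \<le> j" "j < length p"
  shows "gdist V E (p ! i) (p ! j) \<le> j - i"
  using gdist_le_walk[OF is_walk_segment(1-3)[OF assms]] is_walk_segment(4)[OF assms] by simp

lemma gdist_nth_triangle: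
  assumes "is_walk V E p" "i \<le> j" "j \<le> k" "k < length p"
  shows "gdist V E (p ! i) (p ! k) \<le> gdist V E (p ! i) (p ! j) + gdist V E (p ! j) (p ! k)"
  using gdist_triangle[OF is_walk_segment(1-3)[of V E p i j] is_walk_segment(1-3)[of V E p j k]]
    assms by simp

definition shortest_walk :: "'a set \<Rightarrow> 'a set set \<Rightarrow> 'a list \<Rightarrow> bool" where
  "shortest_walk V E p \<longleftrightarrow> is_walk V E p \<and> length p = Suc (gdist V E (hd p) (last p))"

lemma shortest_walk_gdist_nth:
  assumes "shortest_walk V E p" "i \<le> j" "j < length p"
  shows "gdist V E (p ! i) (p ! j) = j - i"
proof -
  \<comment> \<open>A shortcut between \<open>p ! i\<close> and \<open>p ! j\<close> would shorten the whole walk.\<close>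
  define n where "n = length p - 1"
  have walk: "is_walk V E p" and "p \<noteq> []"
    using assms(1) by (auto simp: shortest_walk_def is_walk_def)
  then have n: "n < length p" and jn: "j \<le> n"
    using assms(3) by (auto simp: n_def)
  have "length p = Suc (gdist V E (p ! 0) (p ! n))"
    using assms(1) \<open>p \<noteq> []\<close> by (simp add: shortest_walk_def n_def hd_conv_nth last_conv_nth)
  then have "n = gdist V E (p ! 0) (p ! n)"
    using n_def by linarith
  also have "\<dots> \<le> gdist V E (p ! 0) (p ! j) + gdist V E (p ! j) (p ! n)"
    using gdist_nth_triangle[OF walk _ jn n] by simp
  also have "\<dots> \<le> gdist V E (p ! 0) (p ! i) + gdist V E (p ! i) (p ! j) + gdist V E (p ! j) (p ! n)"
    using walk assms(2,3) gdist_nth_triangle[of V E p 0 i j] by simp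
  also have "\<dots> \<le> i + gdist V E (p ! i) (p ! j) + (n - j)"
    using gdist_nth_le[of V E p 0 i] walk gdist_nth_le[OF walk jn n] assms(2,3) by simp
  finally show ?thesis
    using gdist_nth_le[OF walk assms(2,3)] jn by simp
qed

lemma shortest_walk_distinct:
  assumes "shortest_walk V E p"
  shows "distinct p"
proof (subst distinct_conv_nth, intro allI impI)
  have dist_nth: "gdist V E (p ! i) (p ! j) = j - i" if "i \<le> j" "j < length p" for i j
    using shortest_walk_gdist_nth[OF assms that] .
  fix i j
  assume "i < length p" "j < length p" "i \<noteq> j"
  then show "p ! i \<noteq> p ! j"
    using dist_nth[of i j] dist_nth[of j i] dist_nth[of i i] dist_nth[of j j] by fastforce
qed

lemma diameter_shortest_walk:
  assumes "finite V" "connected_graph V E"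
  obtains p where "shortest_walk V E p" "length p = Suc (diameter V E)"
proof -
  let ?D = "{gdist V E u v | u v. u \<in> V \<and> v \<in> V}"
  have "?D = (\<lambda>(u, v). gdist V E u v) ` (V \<times> V)"
    by auto
  moreover have "V \<noteq> {}"
    using assms(2) by (simp add: connected_graph_def)
  ultimately have "diameter V E \<in> ?D"
    unfolding diameter_def using assms(1) by (intro Max_in) auto
  then obtain u v where uv: "u \<in> V" "v \<in> V" "gdist V E u v = diameter V E"
    by auto
  then obtain p where "is_walk V E p" "hd p = u" "last p = v"
    using assms(2) unfolding connected_graph_def by blast
  then obtain q where "is_walk V E q" "hd q = u" "last q = v" "length q = Suc (gdist V E u v)"
    by (rule shortest_walk_exists)
  then show ?thesis
    using uv(3) by (intro that) (auto simp: shortest_walk_def)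
qed

lemma gdist_edge_doubleton: "gdist_edge V E v {a, b} = min (gdist V E v a) (gdist V E v b)"
  by (simp add: gdist_edge_def)

lemma shortest_walk_m_edge_ge:
  assumes "finite E" "shortest_walk V E p" "length p = Suc n"
  shows "n - 1 \<le> m_edge V E (p ! 1) (p ! 0)"
proof -
  define step where "step i = {p ! i, p ! Suc i}" for i
  have walk: "is_walk V E p"
    using assms(2) by (simp add: shortest_walk_def)
  have dist: "gdist V E (p ! i) (p ! j) = j - i" if "i \<le> j" "j \<le> n" for i j
    using shortest_walk_gdist_nth[OF assms(2)] that assms(3) by simp
  have "inj_on step {1..<n}"
  proof (rule inj_onI)
    fix i j
    assume "i \<in> {1..<n}" "j \<in> {1..<n}" "step i = step j"
    then show "i = j"
      using shortest_walk_distinct[OF assms(2)] assms(3)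
      by (auto simp: step_def doubleton_eq_iff nth_eq_iff_index_eq)
  qed
  then have "n - 1 = card (step ` {1..<n})"
    by (simp add: card_image)
  also have "\<dots> \<le> m_edge V E (p ! 1) (p ! 0)"
    unfolding m_edge_def
  proof (intro card_mono subsetI)
    fix f
    assume "f \<in> step ` {1..<n}"
    then obtain i where i: "1 \<le> i" "i < n" "f = step i"
      by auto
    have "f \<in> E"
      using walk i assms(3) by (simp add: is_walk_def step_def)
    moreover have "gdist_edge V E (p ! 1) f < gdist_edge V E (p ! 0) f"
      using dist[of 1 i] dist[of 0 i] dist[of 0 "Suc i"] i by (simp add: step_def gdist_edge_doubleton)
    ultimately show "f \<in> {f' \<in> E. gdist_edge V E (p ! 1) f' < gdist_edge V E (p ! 0) f'}"
      by simp
  qed (use assms(1) in simp)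
  finally show ?thesis .
qed

lemma gt_nedb_m_edge_le:
  assumes "gt_nedb V E t \<gamma>" "1 \<le> t" "{a, b} \<in> E"
  shows "m_edge V E a b \<le> t * \<gamma>"
proof -
  obtain \<alpha> \<beta> where "{a, b} = {\<alpha>, \<beta>}"
    "m_edge V E \<alpha> \<beta> = t * m_edge V E \<beta> \<alpha>" "m_edge V E \<beta> \<alpha> = \<gamma>"
    using assms(1,3) unfolding gt_nedb_def by blast
  then show ?thesis
    using assms(2) by (auto simp: doubleton_eq_iff)
qed

theorem lemma4p2:
  fixes V :: "'a set" and E :: "'a set set" and t \<gamma> d :: nat
  assumes "simple_graph V E"
    and "t > 1"
    and "connected_graph V E"
    and "gt_nedb V E t \<gamma>"
    and "d = diameter V E"
  shows "int d - 1 \<le> int t * int \<gamma>"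
proof (cases "d = 0")
  case True
  then show ?thesis by (simp add: order_trans[of _ 0])
next
  case False
  have "finite V" "E \<subseteq> Pow V"
    using assms(1) by (auto simp: simple_graph_def)
  then have "finite E"
    by (simp add: finite_subset)
  obtain p where p: "shortest_walk V E p" "length p = Suc d"
    using diameter_shortest_walk \<open>finite V\<close> assms(3,5) by metis
  have "{p ! 0, p ! 1} \<in> E"
    using p False by (simp add: shortest_walk_def is_walk_def)
  then have "m_edge V E (p ! 1) (p ! 0) \<le> t * \<gamma>"
    using gt_nedb_m_edge_le assms(2,4) by (metis insert_commute less_imp_le)
  moreover have "d - 1 \<le> m_edge V E (p ! 1) (p ! 0)"
    using shortest_walk_m_edge_ge \<open>finite E\<close> p by blast
  ultimately have "d - 1 \<le> t * \<gamma>"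
    by linarith
  then show ?thesis
    using False by (simp add: of_nat_diff flip: of_nat_mult)
qed

end
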